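(* Let $d\ge2$, $n\ge1$, $d\le t\le dn$, and let $\gamma$ be a positive conductivity on the lattice graph below. Suppose $\mathbf u\in\mathbb R^{L_t^{\mathcal S}\cup J_{t-1}^{\mathcal S}}$ satisfies $\sum_{q\in\mathcal N(p)}\gamma_{pq}(\mathbf u_q-\mathbf u_p)=0$ for all $p\in L_{t-1}^{\mathcal S}$, $\mathbf u=0$ on $J_{t-1}^{\mathcal S}$, and $\gamma_{bq_b}(\mathbf u_{q_b}-\mathbf u_b)=0$ for all $b\in J_{t-1}^{\mathcal S}$. Then $\mathbf u=0$.
   Context: Lattice: $D=\{x\in\mathbb Z^d:1\le x_i\le n\ \forall i\}$, $\partial D=\{p\in\mathbb Z^d:\min_{q\in D}\|q-p\|_{\ell^1}=1\}$; $E$ = unordered pairs $pq\subseteq D\cup\partial D$ with $\|p-q\|_{\ell^1}=1$, not both in $\partial D$; $\mathcal N(p)=\{q:pq\in E\}$; each $b\in\partial D$ has exactly one neighbour $q_b$, which lies in $D$. Conductivity $\gamma:E\to(0,\infty)$, symmetric. With $s(x)=\sum_ix_i$: $L_t^{\mathcal S}=\{x\in D:s(x)\le t\}$, $K_t^+=\{x\in\partial D:s(x)=t,\max_ix_i=n+1\}$, $K_t^-=\{x\in\partial D:s(x)=t,\min_ix_i=0\}$, $K_t^{\mathcal S\pm}=\bigcup_{\ell\le t}K_\ell^\pm$, $J_t^{\mathcal S}=K_t^{\mathcal S-}\cup K_{t+1}^{\mathcal S+}$. (All neighbours of nodes of $L_{t-1}^{\mathcal S}$, and all $q_b$ with $b\in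 J_{t-1}^{\mathcal S}$, lie in $L_t^{\mathcal S}\cup J_{t-1}^{\mathcal S}$.) *)

theory Defs
  imports Complex_Main
begin

text \<open>Points of Z^d are represented as integer lists of length d.\<close>

definition l1dist :: "int list \<Rightarrow> int list \<Rightarrow> int" where
  "l1dist p q = (\<Sum>i<length p. \<bar>p ! i - q ! i\<bar>)"

definition latD :: "nat \<Rightarrow> nat \<Rightarrow> int list set" where
  "latD d n = {x. length x = d \<and> (\<forall>i<d. 1 \<le> x ! i \<and> x ! i \<le> int n)}"

definition bdry :: "nat \<Rightarrow> nat \<Rightarrow> int list set" where
  "bdry d n = {p. length p = d \<and> (\<forall>q\<in>latD d n. 1 \<le> l1dist q p)
                  \<and> (\<exists>q\<in>latD d n. l1dist q p = 1)}"

definition is_edge :: "nat \<Rightarrow> nat \<Rightarrow> int list \<Rightarrow> int list \<Rightarrow> bool" where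
  "is_edge d n p q \<longleftrightarrow> p \<in> latD d n \<union> bdry d n \<and> q \<in> latD d n \<union> bdry d n
      \<and> l1dist p q = 1 \<and> \<not> (p \<in> bdry d n \<and> q \<in> bdry d n)"

definition nbrs :: "nat \<Rightarrow> nat \<Rightarrow> int list \<Rightarrow> int list set" where
  "nbrs d n p = {q. is_edge d n p q}"

definition qb :: "nat \<Rightarrow> nat \<Rightarrow> int list \<Rightarrow> int list" where
  "qb d n b = (THE q. is_edge d n b q)"

definition LS :: "nat \<Rightarrow> nat \<Rightarrow> int \<Rightarrow> int list set" where
  "LS d n t = {x \<in> latD d n. sum_list x \<le> t}"

definition Kplus :: "nat \<Rightarrow> nat \<Rightarrow> int \<Rightarrow> int list set" where
  "Kplus d n t = {x \<in> bdry d n. sum_list x = t \<and> Max (set x) = int n + 1}"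

definition Kminus :: "nat \<Rightarrow> nat \<Rightarrow> int \<Rightarrow> int list set" where
  "Kminus d n t = {x \<in> bdry d n. sum_list x = t \<and> Min (set x) = 0}"

definition KSplus :: "nat \<Rightarrow> nat \<Rightarrow> int \<Rightarrow> int list set" where
  "KSplus d n t = (\<Union>l\<in>{l. l \<le> t}. Kplus d n l)"

definition KSminus :: "nat \<Rightarrow> nat \<Rightarrow> int \<Rightarrow> int list set" where
  "KSminus d n t = (\<Union>l\<in>{l. l \<le> t}. Kminus d n l)"

definition JS :: "nat \<Rightarrow> nat \<Rightarrow> int \<Rightarrow> int list set" where
  "JS d n t = KSminus d n t \<union> KSplus d n (t + 1)"

end

theory Submission
  imports Defs
begin

text \<open>Sweep D in order of increasing s(x), breaking ties by the first coordinate. If x_1 = 1,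
  lowering it gives a node b of K^-_{s(x)-1}, whose only neighbour is x, and the Neumann condition
  at b together with u_b = 0 forces u_x = 0. Otherwise p = x - e_1 lies in L_{t-1}; every
  neighbour of p other than x lies in J_{t-1} or comes before x in the sweep, and so does p itself,
  so harmonicity of u at p reduces to gamma_px u_x = 0.\<close>

lemma sum_list_list_update:
  fixes xs :: "'a::ab_group_add list"
  shows "k < length xs \<Longrightarrow> sum_list (xs[k := v]) = sum_list xs + v - xs ! k"
  by (induction xs arbitrary: k) (auto split: nat.splits)

lemma l1dist_self [simp]: "l1dist x x = 0"
  by (simp add: l1dist_def)

lemma l1dist_commute: "length p = length q \<Longrightarrow> l1dist p q = l1dist q p"
  by (simp add: l1dist_def abs_minus_commute)

lemma l1dist_unit_step:
  assumes "i < length x" "e \<in> {-1, 1}"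
  shows "l1dist x (x[i := x ! i + e]) = 1"
proof -
  have "(\<Sum>k<length x. \<bar>x ! k - x[i := x ! i + e] ! k\<bar>) = (\<Sum>k<length x. if k = i then 1 else 0)"
    by (rule sum.cong) (use assms in \<open>auto simp: nth_list_update\<close>)
  then show ?thesis
    using assms(1) by (simp add: l1dist_def)
qed

lemma l1dist_eq_1_imp_unit_step:
  assumes "length p = length q" "l1dist p q = 1"
  obtains j e where "j < length p" "e \<in> {-1, 1}" "q = p[j := p ! j + e]"
proof -
  let ?f = "\<lambda>i. \<bar>p ! i - q ! i\<bar>"
  have sum_f: "(\<Sum>i<length p. ?f i) = 1"
    using assms(2) by (simp add: l1dist_def)
  have "\<exists>j<length p. p ! j \<noteq> q ! j"
  proof (rule ccontr)
    assume "\<not> ?thesis"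
    then have "(\<Sum>i<length p. ?f i) = 0"
      by simp
    with sum_f show False
      by simp
  qed
  then obtain j where j: "j < length p" "p ! j \<noteq> q ! j"
    by blast
  have "(\<Sum>i<length p. ?f i) = ?f j + (\<Sum>i\<in>{..<length p} - {j}. ?f i)"
    using j(1) by (simp add: sum.remove)
  moreover have "?f j \<ge> 1"
    using j(2) by simp
  moreover have "(\<Sum>i\<in>{..<length p} - {j}. ?f i) \<ge> 0"
    by (simp add: sum_nonneg)
  ultimately have fj: "?f j = 1" and rest: "(\<Sum>i\<in>{..<length p} - {j}. ?f i) = 0"
    using sum_f by linarith+
  have "q ! i = p ! i" if "i < length p" "i \<noteq> j" for i
    using rest that by (subst (asm) sum_nonneg_eq_0_iff) auto
  then have "q = p[j := p ! j + (q ! j - p ! j)]"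
    by (intro nth_equalityI) (use assms(1) j(1) in \<open>auto simp: nth_list_update\<close>)
  moreover have "q ! j - p ! j \<in> {-1, 1}"
    using fj by (auto simp: abs_if split: if_splits)
  ultimately show ?thesis
    using that j(1) by blast
qed

lemma length_latD: "x \<in> latD d n \<Longrightarrow> length x = d"
  by (simp add: latD_def)

lemma nth_latD: "x \<in> latD d n \<Longrightarrow> k < d \<Longrightarrow> 1 \<le> x ! k \<and> x ! k \<le> int n"
  by (simp add: latD_def)

lemma set_latD: "x \<in> latD d n \<Longrightarrow> z \<in> set x \<Longrightarrow> 1 \<le> z \<and> z \<le> int n"
  by (auto simp: latD_def in_set_conv_nth)

lemma list_update_mem_latD_iff:
  assumes "x \<in> latD d n" "i < d"
  shows "x[i := v] \<in> latD d n \<longleftrightarrow> 1 \<le> v \<and> v \<le> int n"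
  using assms by (force simp: latD_def nth_list_update)

lemma latD_not_bdry: "x \<in> latD d n \<Longrightarrow> x \<notin> bdry d n"
  by (force simp: bdry_def)

lemma l1dist_latD_ge_1:
  assumes "length b = d" "b \<notin> latD d n" "q \<in> latD d n"
  shows "1 \<le> l1dist q b"
proof -
  obtain k where k: "k < d" "\<not> (1 \<le> b ! k \<and> b ! k \<le> int n)"
    using assms(1,2) by (auto simp: latD_def)
  have "1 \<le> \<bar>q ! k - b ! k\<bar>"
    using nth_latD[OF assms(3) k(1)] k(2) by auto
  also have "\<dots> \<le> (\<Sum>i<length q. \<bar>q ! i - b ! i\<bar>)"
    by (rule member_le_sum) (use k(1) length_latD[OF assms(3)] in auto)
  finally show ?thesis
    by (simp add: l1dist_def)
qed

lemma unit_step_mem_latD_Un_bdry: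
  assumes "x \<in> latD d n" "i < d" "e \<in> {-1, 1}"
  shows "x[i := x ! i + e] \<in> latD d n \<union> bdry d n"
proof -
  let ?y = "x[i := x ! i + e]"
  have "?y \<in> bdry d n" if "?y \<notin> latD d n"
    unfolding bdry_def
    using that assms l1dist_latD_ge_1[of ?y d n] l1dist_unit_step[of i x e] length_latD[OF assms(1)]
    by auto
  then show ?thesis
    by blast
qed

lemma is_edge_length: "is_edge d n p q \<Longrightarrow> length p = d \<and> length q = d"
  by (auto simp: is_edge_def latD_def bdry_def)

lemma is_edge_commute: "is_edge d n p q \<longleftrightarrow> is_edge d n q p"
  by (metis is_edge_def is_edge_length l1dist_commute)

lemma is_edge_unit_step:
  assumes "x \<in> latD d n" "i < d" "e \<in> {-1, 1}"
  shows "is_edge d n x (x[i := x ! i + e])"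
  using unit_step_mem_latD_Un_bdry[OF assms] latD_not_bdry[OF assms(1)] assms
    l1dist_unit_step[of i x e] length_latD[OF assms(1)]
  by (auto simp: is_edge_def)

lemma is_edge_imp_unit_step:
  assumes "is_edge d n p q"
  obtains j e where "j < d" "e \<in> {-1, 1}" "q = p[j := p ! j + e]"
  using assms is_edge_length[OF assms] l1dist_eq_1_imp_unit_step[of p q]
  by (auto simp: is_edge_def)

lemma finite_nbrs: "finite (nbrs d n p)"
proof (rule finite_subset)
  show "nbrs d n p \<subseteq> (\<lambda>(j, e). p[j := p ! j + e]) ` ({..<d} \<times> {-1, 1})"
  proof
    fix q
    assume "q \<in> nbrs d n p"
    then have "is_edge d n p q"
      by (simp add: nbrs_def)
    then obtain j e where "j < d" "e \<in> {-1, 1}" "q = p[j := p ! j + e]"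
      by (rule is_edge_imp_unit_step)
    then show "q \<in> (\<lambda>(j, e). p[j := p ! j + e]) ` ({..<d} \<times> {-1, 1})"
      by force
  qed
qed simp

lemma qb_update_zero:
  assumes x: "x \<in> latD d n" and i: "i < d" "x ! i = 1"
  shows "is_edge d n (x[i := 0]) x" "qb d n (x[i := 0]) = x"
proof -
  let ?b = "x[i := 0]"
  have len: "length x = d"
    using x by (rule length_latD)
  have "is_edge d n x (x[i := x ! i + -1])"
    by (rule is_edge_unit_step[OF x i(1)]) simp
  then show edge: "is_edge d n ?b x"
    using i(2) is_edge_commute by simp
  have "q = x" if q: "is_edge d n ?b q" for q
  proof -
    obtain j e where j: "j < d" "e \<in> {-1, 1}" and q_eq: "q = ?b[j := ?b ! j + e]"
      using q by (rule is_edge_imp_unit_step)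
    have "?b \<notin> latD d n"
      using list_update_mem_latD_iff[OF x i(1)] by simp
    then have q_in: "q \<in> latD d n"
      using q by (auto simp: is_edge_def)
    then have "j = i"
      using q_eq i(1) len nth_latD[OF q_in i(1)] by (cases "j = i") auto
    then have "q = x[i := e]"
      using q_eq i(1) len by simp
    moreover have "e = 1"
      using nth_latD[OF q_in i(1)] \<open>q = x[i := e]\<close> i(1) len j(2) by auto
    ultimately show "q = x"
      using i(2) by (metis list_update_id)
  qed
  then show "qb d n ?b = x"
    unfolding qb_def using edge by (intro the_equality)
qed

lemma lower_step_mem_JS:
  assumes x: "x \<in> latD d n" and i: "i < d"
    and out: "x[i := x ! i - 1] \<notin> latD d n" and sum_x: "sum_list x \<le> t + 1"
  shows "x[i := x ! i - 1] \<in> JS d n t"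
proof -
  let ?b = "x[i := x ! i - 1]"
  have len: "length x = d"
    using x by (rule length_latD)
  have "x ! i = 1"
    using out nth_latD[OF x i] list_update_mem_latD_iff[OF x i] by simp
  have "Min (set ?b) = 0"
  proof (rule Min_eqI)
    show "0 \<in> set ?b"
      using \<open>x ! i = 1\<close> i len set_update_memI[of i x 0] by simp
    show "0 \<le> y" if "y \<in> set ?b" for y
      using that set_update_subset_insert[of x i] set_latD[OF x] \<open>x ! i = 1\<close> by force
  qed simp
  moreover have "?b \<in> bdry d n"
    using unit_step_mem_latD_Un_bdry[OF x i, of "-1"] out by simp
  moreover have "sum_list ?b \<le> t"
    using sum_x i len by (simp add: sum_list_list_update)
  ultimately show ?thesis
    unfolding JS_def KSminus_def Kminus_def by auto
qed

lemma upper_step_mem_JS: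
  assumes x: "x \<in> latD d n" and i: "i < d"
    and out: "x[i := x ! i + 1] \<notin> latD d n" and sum_x: "sum_list x \<le> t"
  shows "x[i := x ! i + 1] \<in> JS d n t"
proof -
  let ?b = "x[i := x ! i + 1]"
  have len: "length x = d"
    using x by (rule length_latD)
  have "x ! i = int n"
    using out nth_latD[OF x i] list_update_mem_latD_iff[OF x i] by simp
  have "Max (set ?b) = int n + 1"
  proof (rule Max_eqI)
    show "int n + 1 \<in> set ?b"
      using \<open>x ! i = int n\<close> i len set_update_memI[of i x "int n + 1"] by simp
    show "y \<le> int n + 1" if "y \<in> set ?b" for y
      using that set_update_subset_insert[of x i] set_latD[OF x] \<open>x ! i = int n\<close> by force
  qed simp
  moreover have "?b \<in> bdry d n"
    using unit_step_mem_latD_Un_bdry[OF x i, of 1] out by simp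
  moreover have "sum_list ?b \<le> t + 1"
    using sum_x i len by (simp add: sum_list_list_update)
  ultimately show ?thesis
    unfolding JS_def KSplus_def Kplus_def by auto
qed

lemma nbrs_LS_subset:
  assumes p: "p \<in> LS d n t"
  shows "nbrs d n p \<subseteq> LS d n (t + 1) \<union> JS d n t"
proof
  fix q
  assume "q \<in> nbrs d n p"
  then have "is_edge d n p q"
    by (simp add: nbrs_def)
  then obtain j e where j: "j < d" and e: "e \<in> {-1, 1}" and q: "q = p[j := p ! j + e]"
    by (rule is_edge_imp_unit_step)
  have pD: "p \<in> latD d n" and sum_p: "sum_list p \<le> t"
    using p by (auto simp: LS_def)
  show "q \<in> LS d n (t + 1) \<union> JS d n t"
  proof (cases "q \<in> latD d n")
    case True
    then show ?thesis
      using q j e sum_p length_latD[OF pD] by (auto simp: LS_def sum_list_list_update)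
  next
    case False
    then show ?thesis
      using e q lower_step_mem_JS[OF pD j, of t] upper_step_mem_JS[OF pD j _ sum_p] sum_p by auto
  qed
qed

lemma sum_mult_eq_0_single_support:
  fixes w f :: "'a \<Rightarrow> 'b::field"
  assumes "finite N" "x \<in> N" "(\<Sum>q\<in>N. w q * f q) = 0"
    and "\<And>q. q \<in> N - {x} \<Longrightarrow> f q = 0" "w x \<noteq> 0"
  shows "f x = 0"
proof -
  have "(\<Sum>q\<in>N. w q * f q) = w x * f x + (\<Sum>q\<in>N - {x}. w q * f q)"
    using assms(1,2) by (rule sum.remove)
  also have "(\<Sum>q\<in>N - {x}. w q * f q) = 0"
    using assms(4) by simp
  finally show ?thesis
    using assms(3,5) by simp
qed

definition sweep_order :: "int list rel" where
  "sweep_order = measures [\<lambda>x. nat (sum_list x), \<lambda>x. nat (x ! 0)]"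

lemma wf_sweep_order: "wf sweep_order"
  by (simp add: sweep_order_def)

lemma sweep_orderI:
  assumes "y \<in> latD d n" "0 < d"
    and "sum_list y < sum_list x \<or> sum_list y = sum_list x \<and> y ! 0 < x ! 0"
  shows "(y, x) \<in> sweep_order"
proof -
  have "0 \<le> sum_list y"
    using set_latD[OF assms(1)] by (fastforce intro: sum_list_nonneg)
  moreover have "1 \<le> y ! 0"
    using nth_latD[OF assms(1,2)] by simp
  ultimately show ?thesis
    using assms(3) by (auto simp: sweep_order_def)
qed

lemma nbr_of_lowered_first_precedes:
  assumes "0 < d" "x \<in> latD d n" "is_edge d n (x[0 := x ! 0 - 1]) q" "q \<noteq> x" "q \<in> latD d n"
  shows "(q, x) \<in> sweep_order"
proof -
  let ?p = "x[0 := x ! 0 - 1]"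
  obtain j e where j: "j < d" and e: "e \<in> {-1, 1}" and q: "q = ?p[j := ?p ! j + e]"
    using assms(3) by (rule is_edge_imp_unit_step)
  have len: "length x = d"
    using assms(2) by (rule length_latD)
  have "j \<noteq> 0" if "e = 1"
  proof
    assume "j = 0"
    then have "q = x"
      using q that len assms(1) by simp
    with assms(4) show False ..
  qed
  then have "sum_list q < sum_list x \<or> sum_list q = sum_list x \<and> q ! 0 < x ! 0"
    using e q j len assms(1) by (auto simp: sum_list_list_update nth_list_update)
  then show ?thesis
    by (rule sweep_orderI[OF assms(5,1)])
qed

lemma vanishes_on_lower_face:
  fixes \<gamma> :: "int list \<Rightarrow> int list \<Rightarrow> real" and u :: "int list \<Rightarrow> real"
  assumes gamma_pos: "\<And>p q. is_edge d n p q \<Longrightarrow> \<gamma> p q > 0"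
    and dir: "\<And>b. b \<in> JS d n t \<Longrightarrow> u b = 0"
    and neu: "\<And>b. b \<in> JS d n t \<Longrightarrow> \<gamma> b (qb d n b) * (u (qb d n b) - u b) = 0"
    and x: "x \<in> latD d n" and i: "i < d" "x ! i = 1" and sum_x: "sum_list x \<le> t + 1"
  shows "u x = 0"
proof -
  let ?b = "x[i := 0]"
  have "x[i := x ! i - 1] \<notin> latD d n"
    using i(2) list_update_mem_latD_iff[OF x i(1)] by simp
  then have b: "?b \<in> JS d n t"
    using lower_step_mem_JS[OF x i(1) _ sum_x] i(2) by simp
  have edge: "is_edge d n ?b x" and "qb d n ?b = x"
    using qb_update_zero[OF x i] by auto
  then have "\<gamma> ?b x * u x = 0"
    using neu[OF b] dir[OF b] by simp
  then show ?thesis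
    using gamma_pos[OF edge] by simp
qed

lemma vanishes_on_LS:
  fixes \<gamma> :: "int list \<Rightarrow> int list \<Rightarrow> real" and u :: "int list \<Rightarrow> real"
  assumes "0 < d"
    and gamma_pos: "\<And>p q. is_edge d n p q \<Longrightarrow> \<gamma> p q > 0"
    and harm: "\<And>p. p \<in> LS d n t \<Longrightarrow> (\<Sum>q\<in>nbrs d n p. \<gamma> p q * (u q - u p)) = 0"
    and dir: "\<And>b. b \<in> JS d n t \<Longrightarrow> u b = 0"
    and neu: "\<And>b. b \<in> JS d n t \<Longrightarrow> \<gamma> b (qb d n b) * (u (qb d n b) - u b) = 0"
  shows "x \<in> LS d n (t + 1) \<Longrightarrow> u x = 0"
  using wf_sweep_order
proof (induction x rule: wf_induct_rule)
  case (less x)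
  then have x: "x \<in> latD d n" and sum_x: "sum_list x \<le> t + 1"
    by (auto simp: LS_def)
  have len: "length x = d" and "1 \<le> x ! 0"
    using length_latD[OF x] nth_latD[OF x \<open>0 < d\<close>] by auto
  show "u x = 0"
  proof (cases "x ! 0 = 1")
    case True
    show ?thesis
      by (rule vanishes_on_lower_face[where \<gamma> = \<gamma> and u = u, OF gamma_pos dir neu x \<open>0 < d\<close> True sum_x])
  next
    case False
    let ?p = "x[0 := x ! 0 - 1]"
    have pD: "?p \<in> latD d n"
      using False \<open>1 \<le> x ! 0\<close> nth_latD[OF x \<open>0 < d\<close>] list_update_mem_latD_iff[OF x \<open>0 < d\<close>]
      by simp
    have sum_p: "sum_list ?p = sum_list x - 1"
      using len \<open>0 < d\<close> by (simp add: sum_list_list_update)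
    then have p: "?p \<in> LS d n t"
      using pD sum_x by (simp add: LS_def)
    have "is_edge d n x (x[0 := x ! 0 + -1])"
      by (rule is_edge_unit_step[OF x \<open>0 < d\<close>]) simp
    then have edge: "is_edge d n ?p x"
      by (simp add: is_edge_commute)
    have "(?p, x) \<in> sweep_order"
      using sum_p by (intro sweep_orderI[OF pD \<open>0 < d\<close>]) simp
    then have "u ?p = 0"
      using less.IH p by (auto simp: LS_def)
    have others: "u q - u ?p = 0" if "q \<in> nbrs d n ?p - {x}" for q
      using nbrs_LS_subset[OF p] that dir less.IH nbr_of_lowered_first_precedes[OF \<open>0 < d\<close> x]
        \<open>u ?p = 0\<close>
      by (auto simp: nbrs_def LS_def)
    have "u x - u ?p = 0"
      using sum_mult_eq_0_single_support[OF finite_nbrs _ harm[OF p] others] edge gamma_pos[OF edge]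
      by (simp add: nbrs_def)
    then show ?thesis
      using \<open>u ?p = 0\<close> by simp
  qed
qed

theorem lemma3p1:
  fixes d n :: nat and t :: int
    and \<gamma> :: "int list \<Rightarrow> int list \<Rightarrow> real"
    and u :: "int list \<Rightarrow> real"
  assumes "d \<ge> 2" and "n \<ge> 1"
    and "int d \<le> t" and "t \<le> int d * int n"
    and gamma_pos: "\<And>p q. is_edge d n p q \<Longrightarrow> \<gamma> p q > 0"
    and gamma_sym: "\<And>p q. is_edge d n p q \<Longrightarrow> \<gamma> p q = \<gamma> q p"
    and harm: "\<And>p. p \<in> LS d n (t - 1) \<Longrightarrow>
                 (\<Sum>q\<in>nbrs d n p. \<gamma> p q * (u q - u p)) = 0"
    and dir: "\<And>b. b \<in> JS d n (t - 1) \<Longrightarrow> u b = 0"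
    and neu: "\<And>b. b \<in> JS d n (t - 1) \<Longrightarrow> \<gamma> b (qb d n b) * (u (qb d n b) - u b) = 0"
  shows "\<forall>x \<in> LS d n t \<union> JS d n (t - 1). u x = 0"
proof -
  have "u x = 0" if "x \<in> LS d n t" for x
    using vanishes_on_LS[of d n \<gamma> "t - 1" u x] assms(1) gamma_pos harm dir neu that by simp
  then show ?thesis
    using dir by blast
qed

end
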